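(* Let $R$ be a ring with unit and let $C$ be a bounded chain complex of finitely generated free $R[x,x^{-1}]$-modules. Then there exists a strict perfect complex of sheaves $\mathcal{V} = (V^- \xrightarrow{\mu^-} V \xleftarrow{\mu^+} V^+)$ on $\mathbb{P}^1$ such that: (1) the complexes $V^-$ and $V^+$ consist of finitely generated free $R[x^{-1}]$- and $R[x]$-modules, respectively; (2) the complex $V$ is isomorphic to $C$; (3) the complex of global sections $H^0(\mathbb{P}^1;\mathcal{V})$, given in each degree $n$ by $\ker(-\mu^-+\mu^+\colon V^-_n\oplus V^+_n\to V_n)$, is a bounded complex of finitely generated free $R$-modules; (4) $H^j(\mathbb{P}^1;\mathcal{V}) = 0$ in each chain degree for all $j\geq 1$; that is, $-\mu^-+\mu^+\colon V^-_n\oplus V^+_n\to V_n$ is surjective for every $n$.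
   Context: Modules are right modules. A sheaf on $\mathbb{P}^1$ over $R$ is a diagram $M^- \xrightarrow{\mu^-} M \xleftarrow{\mu^+} M^+$ where $M^-$ is an $R[x^{-1}]$-module, $M$ an $R[x,x^{-1}]$-module, $M^+$ an $R[x]$-module, $\mu^-$ is $R[x^{-1}]$-linear, $\mu^+$ is $R[x]$-linear, and the adjoint maps $M^-\otimes_{R[x^{-1}]}R[x,x^{-1}]\to M$ and $M^+\otimes_{R[x]}R[x,x^{-1}]\to M$ are isomorphisms; morphisms are compatible triples of linear maps. A vector bundle is a sheaf whose three entries are finitely generated projective over their respective rings; a strict perfect complex of sheaves is a bounded chain complex of vector bundles. For a sheaf $\mathcal{M}$ the cohomology modules are $H^0(\mathbb{P}^1;\mathcal{M}) = \ker(-\mu^-+\mu^+\colon M^-\oplus M^+\to M)$, $H^1(\mathbb{P}^1;\mathcal{M}) = \mathrm{coker}(-\mu^-+\mu^+)$, and $H^j = 0$ for $j\ne 0,1$; these are $R$-modules. *)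

theory Defs
  imports "HOL-Library.Poly_Mapping" "Jordan_Normal_Form.Matrix"
begin

text \<open>R[x,x^-1] is the group ring of the integers over R: finitely supported
  functions int to R with convolution product.\<close>

type_synonym 'a laurent = "int \<Rightarrow>\<^sub>0 'a"

definition Rx :: "'a::zero laurent set" where
  "Rx = {f. Poly_Mapping.keys f \<subseteq> {0..}}"

definition Rxinv :: "'a::zero laurent set" where
  "Rxinv = {f. Poly_Mapping.keys f \<subseteq> {..0}}"

definition const_L :: "'a::zero \<Rightarrow> 'a laurent" where
  "const_L r = Poly_Mapping.single 0 r"

text \<open>A finitely generated free right S-module (S one of the rings above) is S^n,
  realised as column vectors of length n with entries in S; an S-linear map
  S^m \<rightarrow> S^n is left multiplication by an n x m matrix with entries in S.\<close>

definition vec_over :: "'a set \<Rightarrow> nat \<Rightarrow> 'a vec set" where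
  "vec_over S n = {v. v \<in> carrier_vec n \<and> (\<forall>i<n. v $ i \<in> S)}"

definition mat_over :: "'a set \<Rightarrow> nat \<Rightarrow> nat \<Rightarrow> 'a mat set" where
  "mat_over S m n = {A. A \<in> carrier_mat m n \<and> (\<forall>i<m. \<forall>j<n. A $$ (i,j) \<in> S)}"

definition iso_mat_over :: "'a::semiring_1 set \<Rightarrow> 'a mat \<Rightarrow> bool" where
  "iso_mat_over S A \<longleftrightarrow> (\<exists>B \<in> mat_over S (dim_col A) (dim_row A).
      A * B = 1\<^sub>m (dim_row A) \<and> B * A = 1\<^sub>m (dim_col A))"

definition bounded_ranks :: "(int \<Rightarrow> nat) \<Rightarrow> bool" where
  "bounded_ranks r \<longleftrightarrow> (\<exists>lo hi. \<forall>n. n < lo \<or> hi < n \<longrightarrow> r n = 0)"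

definition free_complex :: "'a::semiring_0 set \<Rightarrow> (int \<Rightarrow> nat) \<Rightarrow> (int \<Rightarrow> 'a mat) \<Rightarrow> bool" where
  "free_complex S r d \<longleftrightarrow>
     (\<forall>n. d n \<in> mat_over S (r (n - 1)) (r n)) \<and>
     (\<forall>n. d (n - 1) * d n = 0\<^sub>m (r (n - 2)) (r n)) \<and>
     bounded_ranks r"

definition chain_map :: "'a::semiring_0 set \<Rightarrow> (int \<Rightarrow> nat) \<Rightarrow> (int \<Rightarrow> 'a mat)
    \<Rightarrow> (int \<Rightarrow> nat) \<Rightarrow> (int \<Rightarrow> 'a mat) \<Rightarrow> (int \<Rightarrow> 'a mat) \<Rightarrow> bool" where
  "chain_map S r d r' d' f \<longleftrightarrow>
     (\<forall>n. f n \<in> mat_over S (r' n) (r n)) \<and> (\<forall>n. f (n - 1) * d n = d' n * f n)"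

definition complex_iso :: "'a::semiring_1 set \<Rightarrow> (int \<Rightarrow> nat) \<Rightarrow> (int \<Rightarrow> 'a mat)
    \<Rightarrow> (int \<Rightarrow> nat) \<Rightarrow> (int \<Rightarrow> 'a mat) \<Rightarrow> bool" where
  "complex_iso S r d r' d' \<longleftrightarrow> (\<exists>f g. chain_map S r d r' d' f \<and> chain_map S r' d' r d g \<and>
     (\<forall>n. g n * f n = 1\<^sub>m (r n) \<and> f n * g n = 1\<^sub>m (r' n)))"

text \<open>Data: V^- (ranks a, differentials dm, over R[x^-1]), V (ranks c, differentials d,
  over R[x,x^-1]), V^+ (ranks b, differentials dp, over R[x]), and the structure maps
  mum n : V^-_n \<rightarrow> V_n, mup n : V^+_n \<rightarrow> V_n, given by their matrices over R[x,x^-1]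
  (an R[x^-1]-linear map R[x^-1]^a \<rightarrow> R[x,x^-1]^c is determined by the images of the basis).
  The adjoint map V^-_n \<otimes> R[x,x^-1] = R[x,x^-1]^(a n) \<rightarrow> V_n is multiplication by the
  same matrix, so the sheaf condition says that this matrix is invertible over R[x,x^-1].\<close>

definition sheaf_complex_free ::
  "(int \<Rightarrow> nat) \<Rightarrow> (int \<Rightarrow> 'a::ring_1 laurent mat) \<Rightarrow> (int \<Rightarrow> 'a laurent mat)
   \<Rightarrow> (int \<Rightarrow> nat) \<Rightarrow> (int \<Rightarrow> 'a laurent mat) \<Rightarrow> (int \<Rightarrow> 'a laurent mat)
   \<Rightarrow> (int \<Rightarrow> nat) \<Rightarrow> (int \<Rightarrow> 'a laurent mat) \<Rightarrow> bool" where
  "sheaf_complex_free a dm mum b dp mup c d \<longleftrightarrow>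
     free_complex Rxinv a dm \<and> free_complex Rx b dp \<and> free_complex UNIV c d \<and>
     chain_map UNIV a dm c d mum \<and> chain_map UNIV b dp c d mup \<and>
     (\<forall>n. iso_mat_over UNIV (mum n) \<and> iso_mat_over UNIV (mup n))"

definition H0 :: "(int \<Rightarrow> nat) \<Rightarrow> (int \<Rightarrow> 'a::ring_1 laurent mat)
   \<Rightarrow> (int \<Rightarrow> nat) \<Rightarrow> (int \<Rightarrow> 'a laurent mat) \<Rightarrow> (int \<Rightarrow> nat) \<Rightarrow> int
   \<Rightarrow> ('a laurent vec \<times> 'a laurent vec) set" where
  "H0 a mum b mup c n = {(u, w). u \<in> vec_over Rxinv (a n) \<and> w \<in> vec_over Rx (b n) \<and>
       - (mum n *\<^sub>v u) + mup n *\<^sub>v w = 0\<^sub>v (c n)}"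

definition rlin_comb :: "nat \<Rightarrow> 'a::ring_1 laurent vec list \<Rightarrow> 'a list \<Rightarrow> 'a laurent vec" where
  "rlin_comb n vs cs = vec n (\<lambda>i. \<Sum>j<length vs. (vs ! j) $ i * const_L (cs ! j))"

definition fg_free_R :: "nat \<Rightarrow> nat \<Rightarrow> ('a::ring_1 laurent vec \<times> 'a laurent vec) set \<Rightarrow> bool" where
  "fg_free_R k l K \<longleftrightarrow>
     (\<forall>x\<in>K. \<forall>y\<in>K. \<forall>r s. (rlin_comb k [fst x, fst y] [r, s], rlin_comb l [snd x, snd y] [r, s]) \<in> K) \<and>
     (\<exists>es. set es \<subseteq> K \<and>
        (\<forall>x\<in>K. \<exists>!cs. length cs = length es \<and>
            x = (rlin_comb k (map fst es) cs, rlin_comb l (map snd es) cs)))"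

definition H0_bounded_fg_free_complex ::
  "(int \<Rightarrow> nat) \<Rightarrow> (int \<Rightarrow> 'a::ring_1 laurent mat) \<Rightarrow> (int \<Rightarrow> 'a laurent mat)
   \<Rightarrow> (int \<Rightarrow> nat) \<Rightarrow> (int \<Rightarrow> 'a laurent mat) \<Rightarrow> (int \<Rightarrow> 'a laurent mat)
   \<Rightarrow> (int \<Rightarrow> nat) \<Rightarrow> bool" where
  "H0_bounded_fg_free_complex a dm mum b dp mup c \<longleftrightarrow>
     (\<forall>n. fg_free_R (a n) (b n) (H0 a mum b mup c n)) \<and>
     (\<forall>n. \<forall>(u, w) \<in> H0 a mum b mup c n. (dm n *\<^sub>v u, dp n *\<^sub>v w) \<in> H0 a mum b mup c (n - 1)) \<and>
     (\<exists>lo hi. \<forall>n. n < lo \<or> hi < n \<longrightarrow> H0 a mum b mup c n = {(0\<^sub>v (a n), 0\<^sub>v (b n))})"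

definition H1_vanishes ::
  "(int \<Rightarrow> nat) \<Rightarrow> (int \<Rightarrow> 'a::ring_1 laurent mat)
   \<Rightarrow> (int \<Rightarrow> nat) \<Rightarrow> (int \<Rightarrow> 'a laurent mat) \<Rightarrow> (int \<Rightarrow> nat) \<Rightarrow> bool" where
  "H1_vanishes a mum b mup c \<longleftrightarrow>
     (\<forall>n. \<forall>v \<in> carrier_vec (c n). \<exists>u \<in> vec_over Rxinv (a n). \<exists>w \<in> vec_over Rx (b n).
        - (mum n *\<^sub>v u) + mup n *\<^sub>v w = v)"

end

theory Submission
  imports Defs
begin

text \<open>Keep \<open>V = C\<close> and let \<open>V^+\<close>, \<open>V^-\<close> be the same free modules with differentials
  \<open>x^B d\<close> and \<open>x^-B d\<close>, where \<open>B\<close> bounds the absolute values of all exponents occurring in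
  the finitely many nonzero entries of \<open>d\<close>; these are complexes over \<open>R[x]\<close> and \<open>R[x^-1]\<close>.
  The structure maps are multiplication by \<open>x^(k n)\<close> and \<open>x^(-k n)\<close>, where \<open>k n = B (hi - n)\<close>
  and \<open>C\<close> vanishes above degree \<open>hi\<close>: they commute with the differentials because
  \<open>k (n - 1) = k n + B\<close>, and \<open>k n \<ge> 0\<close> in every degree where \<open>C\<close> is nonzero.
  In degree \<open>n\<close> the sheaf is then a sum of copies of \<open>O(2 k n)\<close>, whose sections
  \<open>(u, x^(2 k n) u)\<close> with \<open>u\<close> supported in \<open>[-2 k n, 0]\<close> form a free \<open>R\<close>-module on the
  monomials; \<open>H^1\<close> vanishes because for \<open>k \<ge> 0\<close> every Laurent polynomial splits as
  \<open>-x^k a + x^-k b\<close> with \<open>a \<in> R[x^-1]\<close> and \<open>b \<in> R[x]\<close>.\<close>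

definition xpow :: "int \<Rightarrow> 'a::ring_1 laurent" where
  "xpow t = Poly_Mapping.single t 1"

lemma lookup_xpow_mult: "Poly_Mapping.lookup (xpow t * f) s = Poly_Mapping.lookup f (s - t)"
proof -
  have "Poly_Mapping.lookup (xpow t * f) s
      = (\<Sum>l. (1 when t = l) * (\<Sum>q. Poly_Mapping.lookup f q when s = l + q))"
    by (simp add: xpow_def lookup_mult lookup_single)
  also have "\<dots> = (\<Sum>l. if l = t then (\<Sum>q. Poly_Mapping.lookup f q when s = l + q) else 0)"
    by (rule Sum_any.cong) (simp add: when_def)
  also have "\<dots> = (\<Sum>q. Poly_Mapping.lookup f q when s = t + q)"
    by simp
  also have "\<dots> = (\<Sum>q. if q = s - t then Poly_Mapping.lookup f q else 0)"
    by (rule Sum_any.cong) (auto simp: when_def)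
  finally show ?thesis
    by simp
qed

lemma lookup_mult_xpow: "Poly_Mapping.lookup (f * xpow t) s = Poly_Mapping.lookup f (s - t)"
proof -
  have inner: "Sum_any (\<lambda>q. (1 when t = q) when s = l + q) = ((1::'a) when s = l + t)" for l :: int
  proof -
    have "Sum_any (\<lambda>q. (1 when t = q) when s = l + q) = Sum_any (\<lambda>q. if q = t then (1 when s = l + t) else 0)"
      by (rule Sum_any.cong) (auto simp: when_def)
    then show ?thesis
      by simp
  qed
  have "Poly_Mapping.lookup (f * xpow t) s
      = (\<Sum>l. Poly_Mapping.lookup f l * (1 when s = l + t))"
    by (simp add: xpow_def lookup_mult lookup_single inner)
  also have "\<dots> = (\<Sum>l. if l = s - t then Poly_Mapping.lookup f l else 0)"
    by (rule Sum_any.cong) (auto simp: when_def)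
  finally show ?thesis
    by simp
qed

lemma xpow_central: "xpow t * f = f * xpow t"
  by (rule poly_mapping_eqI) (simp add: lookup_xpow_mult lookup_mult_xpow)

lemma xpow_add: "xpow s * xpow t = xpow (s + t)"
  by (simp add: xpow_def mult_single)

lemma xpow_0 [simp]: "xpow 0 = 1"
  by (simp add: xpow_def)

lemma lookup_xpow_const_L:
  "Poly_Mapping.lookup (xpow t * const_L r) s = (if s = t then r else 0)"
  by (simp add: lookup_xpow_mult const_L_def lookup_single when_def)

definition supported_in :: "int set \<Rightarrow> 'a::zero laurent set" where
  "supported_in A = {f. Poly_Mapping.keys f \<subseteq> A}"

lemma Rx_eq_supported_in: "Rx = supported_in {0..}"
  by (simp add: Rx_def supported_in_def)

lemma Rxinv_eq_supported_in: "Rxinv = supported_in {..0}"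
  by (simp add: Rxinv_def supported_in_def)

lemma supported_in_iff:
  "f \<in> supported_in A \<longleftrightarrow> (\<forall>s. s \<notin> A \<longrightarrow> Poly_Mapping.lookup f s = 0)"
  by (auto simp: supported_in_def in_keys_iff)

lemma supported_in_add:
  "f \<in> supported_in A \<Longrightarrow> g \<in> supported_in A \<Longrightarrow> f + g \<in> supported_in A"
  by (simp add: supported_in_iff lookup_add)

lemma supported_in_sum:
  "(\<And>i. i \<in> I \<Longrightarrow> f i \<in> supported_in A) \<Longrightarrow> sum f I \<in> supported_in A"
  by (induction I rule: infinite_finite_induct)
    (auto simp: supported_in_iff lookup_add)

lemma supported_in_mult:
  assumes "\<And>s t. s \<in> A \<Longrightarrow> t \<in> A \<Longrightarrow> s + t \<in> A"
    and "f \<in> supported_in A" "g \<in> supported_in A"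
  shows "f * g \<in> supported_in A"
  using keys_mult[of f g] assms unfolding supported_in_def by fastforce

lemma const_L_supported_in: "0 \<in> A \<Longrightarrow> const_L r \<in> supported_in A"
  by (simp add: const_L_def supported_in_def)

lemma mult_mat_vec_over_supported_in:
  assumes "\<And>s t. s \<in> A \<Longrightarrow> t \<in> A \<Longrightarrow> s + t \<in> A"
    and "M \<in> mat_over (supported_in A) r c" "u \<in> vec_over (supported_in A) c"
  shows "M *\<^sub>v u \<in> vec_over (supported_in A) r"
  using assms unfolding mat_over_def vec_over_def
  by (auto simp: scalar_prod_def intro!: supported_in_sum supported_in_mult)

lemma rlin_comb_vec_over_supported_in:
  assumes "\<And>s t. s \<in> A \<Longrightarrow> t \<in> A \<Longrightarrow> s + t \<in> A" "0 \<in> A"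
    and "set vs \<subseteq> vec_over (supported_in A) n"
  shows "rlin_comb n vs cs \<in> vec_over (supported_in A) n"
proof -
  have "vs ! j $ i \<in> supported_in A" if "j < length vs" "i < n" for i j
    using assms(3) nth_mem[OF that(1)] that(2) by (auto simp: vec_over_def)
  then show ?thesis
    using assms(1,2) unfolding rlin_comb_def vec_over_def
    by (auto intro!: supported_in_sum supported_in_mult const_L_supported_in)
qed

lemma xpow_mult_in_Rx:
  assumes "Poly_Mapping.keys f \<subseteq> {-B..B}"
  shows "xpow B * f \<in> Rx"
  using assms unfolding Rx_eq_supported_in supported_in_iff lookup_xpow_mult
  by (force simp: in_keys_iff)

lemma xpow_mult_in_Rxinv:
  assumes "Poly_Mapping.keys f \<subseteq> {-B..B}"
  shows "xpow (- B) * f \<in> Rxinv"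
  using assms unfolding Rxinv_eq_supported_in supported_in_iff lookup_xpow_mult
  by (force simp: in_keys_iff)

lemma smult_mat_mult:
  fixes x :: "'a::semiring_0"
  assumes "A \<in> carrier_mat nr n" "B \<in> carrier_mat n nc"
  shows "(x \<cdot>\<^sub>m A) * B = x \<cdot>\<^sub>m (A * B)"
  using assms by (intro eq_matI) (auto simp: scalar_prod_def sum_distrib_left mult.assoc)

lemma mult_smult_mat_central:
  fixes x :: "'a::semiring_0"
  assumes "\<And>y. x * y = y * x" "A \<in> carrier_mat nr n" "B \<in> carrier_mat n nc"
  shows "A * (x \<cdot>\<^sub>m B) = x \<cdot>\<^sub>m (A * B)"
proof -
  have "a * (x * b) = x * (a * b)" for a b
    by (metis assms(1) mult.assoc)
  with assms(2,3) show ?thesis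
    by (intro eq_matI) (auto simp: scalar_prod_def sum_distrib_left)
qed

lemma smult_smult_mat: "x \<cdot>\<^sub>m (y \<cdot>\<^sub>m A) = (x * y :: 'a::semigroup_mult) \<cdot>\<^sub>m A"
  by (intro eq_matI) (auto simp: mult.assoc)

lemma one_smult_mat: "(1::'a::monoid_mult) \<cdot>\<^sub>m A = A"
  by (intro eq_matI) auto

lemma smult_mat_mult_vec:
  fixes x :: "'a::semiring_0"
  assumes "u \<in> carrier_vec (dim_col A)"
  shows "(x \<cdot>\<^sub>m A) *\<^sub>v u = x \<cdot>\<^sub>v (A *\<^sub>v u)"
  using assms by (intro eq_vecI) (auto simp: scalar_prod_def sum_distrib_left mult.assoc)

lemma xpow_scalar_mat_mult:
  "(xpow s \<cdot>\<^sub>m 1\<^sub>m c) * (xpow t \<cdot>\<^sub>m 1\<^sub>m c) = xpow (s + t) \<cdot>\<^sub>m 1\<^sub>m c"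
  by (simp add: smult_mat_mult[of "1\<^sub>m c" c c _ c] smult_smult_mat xpow_add)

lemma iso_mat_over_xpow_scalar: "iso_mat_over UNIV (xpow t \<cdot>\<^sub>m 1\<^sub>m c)"
  unfolding iso_mat_over_def
  by (intro bexI[of _ "xpow (- t) \<cdot>\<^sub>m 1\<^sub>m c"])
    (simp_all add: xpow_scalar_mat_mult one_smult_mat mat_over_def)

lemma free_complex_carrier:
  "free_complex S r d \<Longrightarrow> d n \<in> carrier_mat (r (n - 1)) (r n)"
  by (simp add: free_complex_def mat_over_def)

lemma free_complex_exponent_bound:
  assumes "free_complex S r d"
  obtains B :: int where "0 \<le> B"
    and "\<And>n i j. i < r (n - 1) \<Longrightarrow> j < r n \<Longrightarrow> Poly_Mapping.keys (d n $$ (i, j)) \<subseteq> {-B..B}"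
proof -
  obtain lo hi where vanish: "\<And>n. n < lo \<or> hi < n \<Longrightarrow> r n = 0"
    using assms unfolding free_complex_def bounded_ranks_def by blast
  define E where "E = (\<Union>n\<in>{lo..hi}. \<Union>i<r (n - 1). \<Union>j<r n. abs ` Poly_Mapping.keys (d n $$ (i, j)))"
  define B where "B = Max (insert 0 E)"
  have "finite E"
    by (simp add: E_def)
  have "Poly_Mapping.keys (d n $$ (i, j)) \<subseteq> {-B..B}"
    if "i < r (n - 1)" "j < r n" for n i j
  proof
    fix t assume "t \<in> Poly_Mapping.keys (d n $$ (i, j))"
    moreover have "n \<in> {lo..hi}"
      using vanish[of n] that(2) by force
    ultimately have "\<bar>t\<bar> \<in> E"
      using that unfolding E_def by blast
    then have "\<bar>t\<bar> \<le> B"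
      using \<open>finite E\<close> by (simp add: B_def)
    then show "t \<in> {-B..B}"
      by (simp add: abs_le_iff)
  qed
  moreover have "0 \<le> B"
    using \<open>finite E\<close> by (simp add: B_def)
  ultimately show ?thesis
    using that by blast
qed

lemma free_complex_smult:
  assumes "free_complex UNIV r d"
    and "\<And>n. xpow t \<cdot>\<^sub>m d n \<in> mat_over S (r (n - 1)) (r n)"
  shows "free_complex S r (\<lambda>n. xpow t \<cdot>\<^sub>m d n)"
proof -
  have "(xpow t \<cdot>\<^sub>m d (n - 1)) * (xpow t \<cdot>\<^sub>m d n) = 0\<^sub>m (r (n - 2)) (r n)" for n
  proof -
    have dims: "d (n - 1) \<in> carrier_mat (r (n - 2)) (r (n - 1))" "d n \<in> carrier_mat (r (n - 1)) (r n)"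
      using free_complex_carrier[OF assms(1), of n] free_complex_carrier[OF assms(1), of "n - 1"]
      by simp_all
    then have "(xpow t \<cdot>\<^sub>m d (n - 1)) * (xpow t \<cdot>\<^sub>m d n) = xpow t \<cdot>\<^sub>m (d (n - 1) * (xpow t \<cdot>\<^sub>m d n))"
      by (intro smult_mat_mult) auto
    also have "\<dots> = xpow t \<cdot>\<^sub>m (xpow t \<cdot>\<^sub>m (d (n - 1) * d n))"
      using dims by (simp add: mult_smult_mat_central xpow_central)
    also have "\<dots> = 0\<^sub>m (r (n - 2)) (r n)"
      using assms(1) by (simp add: free_complex_def)
    finally show ?thesis .
  qed
  with assms show ?thesis
    by (simp add: free_complex_def)
qed

lemma free_complex_twist_Rx:
  assumes "free_complex UNIV r d"
    and "\<And>n i j. i < r (n - 1) \<Longrightarrow> j < r n \<Longrightarrow> Poly_Mapping.keys (d n $$ (i, j)) \<subseteq> {-B..B}"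
  shows "free_complex Rx r (\<lambda>n. xpow B \<cdot>\<^sub>m d n)"
proof (rule free_complex_smult[OF assms(1)])
  fix n
  have "d n \<in> carrier_mat (r (n - 1)) (r n)"
    using assms(1) by (rule free_complex_carrier)
  then show "xpow B \<cdot>\<^sub>m d n \<in> mat_over Rx (r (n - 1)) (r n)"
    using assms(2) by (auto simp: mat_over_def intro!: xpow_mult_in_Rx)
qed

lemma free_complex_twist_Rxinv:
  assumes "free_complex UNIV r d"
    and "\<And>n i j. i < r (n - 1) \<Longrightarrow> j < r n \<Longrightarrow> Poly_Mapping.keys (d n $$ (i, j)) \<subseteq> {-B..B}"
  shows "free_complex Rxinv r (\<lambda>n. xpow (- B) \<cdot>\<^sub>m d n)"
proof (rule free_complex_smult[OF assms(1)])
  fix n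
  have "d n \<in> carrier_mat (r (n - 1)) (r n)"
    using assms(1) by (rule free_complex_carrier)
  then show "xpow (- B) \<cdot>\<^sub>m d n \<in> mat_over Rxinv (r (n - 1)) (r n)"
    using assms(2) by (auto simp: mat_over_def intro!: xpow_mult_in_Rxinv)
qed

lemma chain_map_xpow_scalar:
  assumes "free_complex UNIV r d" "\<And>n. k (n - 1) + t = k n"
  shows "chain_map UNIV r (\<lambda>n. xpow t \<cdot>\<^sub>m d n) r d (\<lambda>n. xpow (k n) \<cdot>\<^sub>m 1\<^sub>m (r n))"
proof -
  have "(xpow (k (n - 1)) \<cdot>\<^sub>m 1\<^sub>m (r (n - 1))) * (xpow t \<cdot>\<^sub>m d n)
      = d n * (xpow (k n) \<cdot>\<^sub>m 1\<^sub>m (r n))" for n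
  proof -
    have dn: "d n \<in> carrier_mat (r (n - 1)) (r n)"
      using assms(1) by (rule free_complex_carrier)
    then have "(xpow (k (n - 1)) \<cdot>\<^sub>m 1\<^sub>m (r (n - 1))) * (xpow t \<cdot>\<^sub>m d n)
        = xpow (k (n - 1)) \<cdot>\<^sub>m (xpow t \<cdot>\<^sub>m d n)"
      by (subst smult_mat_mult) auto
    also have "\<dots> = xpow (k (n - 1) + t) \<cdot>\<^sub>m d n"
      by (simp add: smult_smult_mat xpow_add)
    also have "\<dots> = d n * (xpow (k n) \<cdot>\<^sub>m 1\<^sub>m (r n))"
      by (simp add: assms(2) mult_smult_mat_central[OF xpow_central dn one_carrier_mat]
          right_mult_one_mat[OF dn])
    finally show ?thesis .
  qed
  then show ?thesis
    by (simp add: chain_map_def mat_over_def)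
qed

lemma complex_iso_refl:
  assumes "free_complex UNIV r d"
  shows "complex_iso UNIV r d r d"
proof -
  have "1\<^sub>m (r (n - 1)) * d n = d n * 1\<^sub>m (r n)" for n
    using free_complex_carrier[OF assms, of n] by (simp add: left_mult_one_mat right_mult_one_mat)
  then show ?thesis
    unfolding complex_iso_def chain_map_def
    by (intro exI[of _ "\<lambda>n. 1\<^sub>m (r n)"]) (simp add: mat_over_def)
qed

lemma uminus_add_eq_0_vec_iff:
  fixes p q :: "'a::ab_group_add vec"
  assumes "p \<in> carrier_vec m" "q \<in> carrier_vec m"
  shows "- p + q = 0\<^sub>v m \<longleftrightarrow> q = p"
  using assms by (auto simp: vec_eq_iff neg_eq_iff_add_eq_0[symmetric] add.commute)

lemma H0_differential:
  assumes sheaf: "sheaf_complex_free a dm mum b dp mup c d"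
    and uw: "(u, w) \<in> H0 a mum b mup c n"
  shows "(dm n *\<^sub>v u, dp n *\<^sub>v w) \<in> H0 a mum b mup c (n - 1)"
proof -
  have u: "u \<in> vec_over Rxinv (a n)" and w: "w \<in> vec_over Rx (b n)"
    and sections: "- (mum n *\<^sub>v u) + mup n *\<^sub>v w = 0\<^sub>v (c n)"
    using uw by (auto simp: H0_def)
  have dm: "dm n \<in> mat_over Rxinv (a (n - 1)) (a n)" and dp: "dp n \<in> mat_over Rx (b (n - 1)) (b n)"
    and mum: "\<And>n. mum n \<in> carrier_mat (c n) (a n)" and mup: "\<And>n. mup n \<in> carrier_mat (c n) (b n)"
    and dn: "d n \<in> carrier_mat (c (n - 1)) (c n)"
    and mum_chain: "mum (n - 1) * dm n = d n * mum n"
    and mup_chain: "mup (n - 1) * dp n = d n * mup n"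
    using sheaf by (auto simp: sheaf_complex_free_def free_complex_def chain_map_def mat_over_def)
  have uc: "u \<in> carrier_vec (a n)" and wc: "w \<in> carrier_vec (b n)"
    using u w by (auto simp: vec_over_def)
  have dmc: "dm n \<in> carrier_mat (a (n - 1)) (a n)" and dpc: "dp n \<in> carrier_mat (b (n - 1)) (b n)"
    using dm dp by (auto simp: mat_over_def)
  have image: "mum n *\<^sub>v u \<in> carrier_vec (c n)" "mup n *\<^sub>v w \<in> carrier_vec (c n)"
    using mum[of n] mup[of n] uc wc by auto
  then have same_image: "mup n *\<^sub>v w = mum n *\<^sub>v u"
    using sections uminus_add_eq_0_vec_iff by blast
  have "mum (n - 1) *\<^sub>v (dm n *\<^sub>v u) = d n *\<^sub>v (mum n *\<^sub>v u)"
    using mum[of "n - 1"] mum[of n] dmc dn uc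
    by (simp flip: assoc_mult_mat_vec add: mum_chain)
  moreover have "mup (n - 1) *\<^sub>v (dp n *\<^sub>v w) = d n *\<^sub>v (mup n *\<^sub>v w)"
    using mup[of "n - 1"] mup[of n] dpc dn wc
    by (simp flip: assoc_mult_mat_vec add: mup_chain)
  ultimately have "- (mum (n - 1) *\<^sub>v (dm n *\<^sub>v u)) + mup (n - 1) *\<^sub>v (dp n *\<^sub>v w) = 0\<^sub>v (c (n - 1))"
    using mum[of "n - 1"] mup[of "n - 1"] dmc dpc uc wc mult_mat_vec_carrier[OF dn image(1)]
    by (subst uminus_add_eq_0_vec_iff) (auto simp: same_image)
  moreover have "dm n *\<^sub>v u \<in> vec_over Rxinv (a (n - 1))"
    using dm u unfolding Rxinv_eq_supported_in by (rule mult_mat_vec_over_supported_in[rotated]) simp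
  moreover have "dp n *\<^sub>v w \<in> vec_over Rx (b (n - 1))"
    using dp w unfolding Rx_eq_supported_in by (rule mult_mat_vec_over_supported_in[rotated]) simp
  ultimately show ?thesis
    by (simp add: H0_def)
qed

lemma H0_zero_rank:
  assumes "sheaf_complex_free a dm mum b dp mup c d" "a n = 0" "b n = 0"
  shows "H0 a mum b mup c n = {(0\<^sub>v (a n), 0\<^sub>v (b n))}"
proof -
  have "mum n \<in> carrier_mat (c n) (a n)" "mup n \<in> carrier_mat (c n) (b n)"
    using assms(1) by (auto simp: sheaf_complex_free_def chain_map_def mat_over_def)
  then have "mum n \<in> carrier_mat (c n) 0" "mup n \<in> carrier_mat (c n) 0"
    using assms(2,3) by simp_all
  then have "- (mum n *\<^sub>v 0\<^sub>v 0) + mup n *\<^sub>v 0\<^sub>v 0 = 0\<^sub>v (c n)"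
    by (intro eq_vecI) (auto simp: scalar_prod_def)
  then show ?thesis
    using assms(2,3) by (auto simp: H0_def vec_over_def)
qed

lemma H0_bounded_fg_free_complexI:
  assumes sheaf: "sheaf_complex_free a dm mum b dp mup c d"
    and fg_free: "\<And>n. fg_free_R (a n) (b n) (H0 a mum b mup c n)"
    and "bounded_ranks a" "bounded_ranks b"
  shows "H0_bounded_fg_free_complex a dm mum b dp mup c"
proof -
  obtain lo\<^sub>a hi\<^sub>a lo\<^sub>b hi\<^sub>b where
    "\<And>n. n < lo\<^sub>a \<or> hi\<^sub>a < n \<Longrightarrow> a n = 0" "\<And>n. n < lo\<^sub>b \<or> hi\<^sub>b < n \<Longrightarrow> b n = 0"
    using assms(3,4) unfolding bounded_ranks_def by metis
  then have "H0 a mum b mup c n = {(0\<^sub>v (a n), 0\<^sub>v (b n))}"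
    if "n < min lo\<^sub>a lo\<^sub>b \<or> max hi\<^sub>a hi\<^sub>b < n" for n
    using that by (intro H0_zero_rank[OF sheaf]) auto
  then show ?thesis
    unfolding H0_bounded_fg_free_complex_def
    using fg_free H0_differential[OF sheaf] by blast
qed

text \<open>The pairs \<open>(u, x^m u)\<close>: global sections of \<open>O(m)^c\<close>.\<close>

definition sections_O :: "nat \<Rightarrow> int \<Rightarrow> ('a::ring_1 laurent vec \<times> 'a laurent vec) set" where
  "sections_O c m = {(u, w). u \<in> vec_over Rxinv c \<and> w \<in> vec_over Rx c \<and> w = xpow m \<cdot>\<^sub>v u}"

lemma smult_xpow_vec_eq_iff: "xpow s \<cdot>\<^sub>v w = v \<longleftrightarrow> w = xpow (- s) \<cdot>\<^sub>v v"
  by (auto simp: smult_smult_assoc xpow_add)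

lemma H0_xpow_scalar:
  "H0 r (\<lambda>n. xpow (k n) \<cdot>\<^sub>m 1\<^sub>m (r n)) r (\<lambda>n. xpow (- k n) \<cdot>\<^sub>m 1\<^sub>m (r n)) r n
    = sections_O (r n) (2 * k n)"
proof -
  have scalar: "(xpow t \<cdot>\<^sub>m 1\<^sub>m (r n)) *\<^sub>v v = xpow t \<cdot>\<^sub>v v"
    if "v \<in> carrier_vec (r n)" for t and v :: "'a laurent vec"
    using that by (simp add: smult_mat_mult_vec)
  have "- (xpow (k n) \<cdot>\<^sub>v u) + xpow (- k n) \<cdot>\<^sub>v w = 0\<^sub>v (r n) \<longleftrightarrow> w = xpow (2 * k n) \<cdot>\<^sub>v u"
    if "u \<in> carrier_vec (r n)" "w \<in> carrier_vec (r n)" for u w :: "'a laurent vec"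
  proof -
    have "- (xpow (k n) \<cdot>\<^sub>v u) + xpow (- k n) \<cdot>\<^sub>v w = 0\<^sub>v (r n)
        \<longleftrightarrow> xpow (- k n) \<cdot>\<^sub>v w = xpow (k n) \<cdot>\<^sub>v u"
      using that by (intro uminus_add_eq_0_vec_iff) simp_all
    also have "\<dots> \<longleftrightarrow> w = xpow (k n) \<cdot>\<^sub>v (xpow (k n) \<cdot>\<^sub>v u)"
      by (simp only: smult_xpow_vec_eq_iff minus_minus)
    also have "\<dots> \<longleftrightarrow> w = xpow (2 * k n) \<cdot>\<^sub>v u"
      by (simp only: smult_smult_assoc xpow_add mult_2)
    finally show ?thesis .
  qed
  then show ?thesis
    by (auto simp: H0_def sections_O_def vec_over_def scalar)
qed

lemma sections_O_support:
  assumes "(u, w) \<in> sections_O c m" "i < c" "Poly_Mapping.lookup (u $ i) s \<noteq> 0"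
  shows "s \<in> {-m..0}"
proof -
  have u: "u \<in> vec_over Rxinv c" and w: "w \<in> vec_over Rx c" and "w = xpow m \<cdot>\<^sub>v u"
    using assms(1) by (auto simp: sections_O_def)
  then have "Poly_Mapping.lookup (w $ i) (s + m) = Poly_Mapping.lookup (u $ i) s"
    using assms(2) by (auto simp: vec_over_def lookup_xpow_mult)
  then have "0 \<le> s + m"
    using w assms(2,3) by (force simp: vec_over_def Rx_eq_supported_in supported_in_iff)
  moreover have "s \<le> 0"
    using u assms(2,3) by (force simp: vec_over_def Rxinv_eq_supported_in supported_in_iff)
  ultimately show ?thesis
    by simp
qed

lemma rlin_comb_smult:
  assumes "set vs \<subseteq> carrier_vec n"
  shows "rlin_comb n (map ((\<cdot>\<^sub>v) y) vs) cs = y \<cdot>\<^sub>v rlin_comb n vs cs"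
proof -
  have "(y \<cdot>\<^sub>v vs ! j) $ i = y * vs ! j $ i" if "j < length vs" "i < n" for i j
    using assms nth_mem[OF that(1)] that(2) by auto
  then show ?thesis
    unfolding rlin_comb_def by (intro eq_vecI) (auto simp: sum_distrib_left mult.assoc)
qed

lemma sections_O_closed:
  assumes "x \<in> sections_O c m" "y \<in> sections_O c m"
  shows "(rlin_comb c [fst x, fst y] [r, s], rlin_comb c [snd x, snd y] [r, s]) \<in> sections_O c m"
proof -
  have in_Rxinv: "{fst x, fst y} \<subseteq> vec_over Rxinv c" and in_Rx: "{snd x, snd y} \<subseteq> vec_over Rx c"
    and snd_eq: "[snd x, snd y] = map ((\<cdot>\<^sub>v) (xpow m)) [fst x, fst y]"
    using assms by (auto simp: sections_O_def)
  have "rlin_comb c [snd x, snd y] [r, s] = xpow m \<cdot>\<^sub>v rlin_comb c [fst x, fst y] [r, s]"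
    unfolding snd_eq using in_Rxinv by (intro rlin_comb_smult) (auto simp: vec_over_def)
  moreover have "rlin_comb c [fst x, fst y] [r, s] \<in> vec_over Rxinv c"
    using in_Rxinv unfolding Rxinv_eq_supported_in
    by (intro rlin_comb_vec_over_supported_in) auto
  moreover have "rlin_comb c [snd x, snd y] [r, s] \<in> vec_over Rx c"
    using in_Rx unfolding Rx_eq_supported_in
    by (intro rlin_comb_vec_over_supported_in) auto
  ultimately show ?thesis
    by (simp add: sections_O_def)
qed

definition monomial_vec :: "nat \<Rightarrow> nat \<Rightarrow> int \<Rightarrow> 'a::ring_1 laurent vec" where
  "monomial_vec n i t = vec n (\<lambda>j. if j = i then xpow t else 0)"

lemma smult_monomial_vec: "xpow s \<cdot>\<^sub>v monomial_vec n i t = monomial_vec n i (s + t)"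
  by (intro eq_vecI) (auto simp: monomial_vec_def xpow_add)

lemma monomial_vec_supported_in: "t \<in> A \<Longrightarrow> monomial_vec n i t \<in> vec_over (supported_in A) n"
  by (auto simp: monomial_vec_def vec_over_def supported_in_def xpow_def)

lemma lookup_rlin_comb_monomial_vecs:
  assumes "i < n"
  shows "Poly_Mapping.lookup (rlin_comb n (map (\<lambda>(j, t). monomial_vec n j t) ps) cs $ i) s
    = (\<Sum>idx<length ps. if ps ! idx = (i, s) then cs ! idx else 0)"
proof -
  have entry: "Poly_Mapping.lookup (monomial_vec n j t $ i * const_L r) s = (if (j, t) = (i, s) then r else 0)"
    for j t r
    using assms by (auto simp: monomial_vec_def lookup_xpow_const_L)
  show ?thesis
    using assms unfolding rlin_comb_def
    by (auto simp: lookup_sum entry split: prod.split intro!: sum.cong)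
qed

lemma sum_if_nth_eq_nth:
  assumes "distinct ps" "idx < length ps"
  shows "(\<Sum>idx'<length ps. if ps ! idx' = ps ! idx then g idx' else 0) = g idx"
proof -
  have "(\<Sum>idx'<length ps. if ps ! idx' = ps ! idx then g idx' else 0)
      = (\<Sum>idx'<length ps. if idx' = idx then g idx' else 0)"
    using assms by (intro sum.cong) (auto simp: nth_eq_iff_index_eq)
  then show ?thesis
    using assms(2) by simp
qed

lemma coefficients_rlin_comb_monomial_vecs:
  assumes "distinct ps" "\<And>i t. (i, t) \<in> set ps \<Longrightarrow> i < n" "length cs = length ps"
  shows "map (\<lambda>(i, t). Poly_Mapping.lookup (rlin_comb n (map (\<lambda>(j, t). monomial_vec n j t) ps) cs $ i) t) ps
    = cs" (is "?coeffs = cs")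
proof (rule nth_equalityI)
  fix idx assume "idx < length ?coeffs"
  then have idx: "idx < length ps"
    by simp
  obtain i t where it: "ps ! idx = (i, t)"
    by fastforce
  then have "i < n"
    using assms(2) nth_mem[OF idx] by simp
  then show "?coeffs ! idx = cs ! idx"
    using sum_if_nth_eq_nth[OF assms(1) idx, of "(!) cs"] idx it
    by (simp add: lookup_rlin_comb_monomial_vecs)
qed (simp add: assms(3))

lemma rlin_comb_monomial_vecs_coefficients:
  assumes "distinct ps" "u \<in> carrier_vec n"
    and "\<And>i s. i < n \<Longrightarrow> Poly_Mapping.lookup (u $ i) s \<noteq> 0 \<Longrightarrow> (i, s) \<in> set ps"
  shows "rlin_comb n (map (\<lambda>(j, t). monomial_vec n j t) ps)
      (map (\<lambda>(i, t). Poly_Mapping.lookup (u $ i) t) ps) = u" (is "?comb = u")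
proof (rule eq_vecI)
  fix i assume "i < dim_vec u"
  then have i: "i < n"
    using assms(2) by simp
  show "?comb $ i = u $ i"
  proof (rule poly_mapping_eqI)
    fix s
    show "Poly_Mapping.lookup (?comb $ i) s = Poly_Mapping.lookup (u $ i) s"
    proof (cases "(i, s) \<in> set ps")
      case True
      then obtain idx where "idx < length ps" "ps ! idx = (i, s)"
        by (auto simp: in_set_conv_nth)
      then show ?thesis
        using sum_if_nth_eq_nth[OF assms(1), of idx "\<lambda>idx. map (\<lambda>(i, t). Poly_Mapping.lookup (u $ i) t) ps ! idx"]
        by (simp add: lookup_rlin_comb_monomial_vecs[OF i])
    next
      case False
      then have "ps ! idx \<noteq> (i, s)" if "idx < length ps" for idx
        using nth_mem[OF that] by auto
      then show ?thesis
        using False assms(3)[OF i, of s]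
        by (auto simp: lookup_rlin_comb_monomial_vecs[OF i] intro!: sum.neutral)
    qed
  qed
qed (use assms(2) in \<open>simp add: rlin_comb_def\<close>)

lemma fg_free_RI:
  assumes "\<And>x y r s. x \<in> K \<Longrightarrow> y \<in> K \<Longrightarrow>
      (rlin_comb k [fst x, fst y] [r, s], rlin_comb l [snd x, snd y] [r, s]) \<in> K"
    and "set es \<subseteq> K"
    and span: "\<And>x. x \<in> K \<Longrightarrow> length (coeffs x) = length es \<and>
      x = (rlin_comb k (map fst es) (coeffs x), rlin_comb l (map snd es) (coeffs x))"
    and unique: "\<And>cs. length cs = length es \<Longrightarrow>
      coeffs (rlin_comb k (map fst es) cs, rlin_comb l (map snd es) cs) = cs"
  shows "fg_free_R k l K"
  unfolding fg_free_R_def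
proof (intro conjI exI ballI allI)
  fix x assume "x \<in> K"
  then show "\<exists>!cs. length cs = length es \<and> x = (rlin_comb k (map fst es) cs, rlin_comb l (map snd es) cs)"
    using span unique by (intro ex1I[of _ "coeffs x"]) auto
qed (use assms(1,2) in blast)+

lemma sections_O_fg_free: "fg_free_R c c (sections_O c m :: ('a::ring_1 laurent vec \<times> _) set)"
proof -
  define ps where "ps = List.product [0..<c] [-m..0]"
  define vs :: "'a laurent vec list" where "vs = map (\<lambda>(i, t). monomial_vec c i t) ps"
  define es where "es = map (\<lambda>v. (v, xpow m \<cdot>\<^sub>v v)) vs"
  define coeffs :: "'a laurent vec \<times> 'a laurent vec \<Rightarrow> 'a list"
    where "coeffs x = map (\<lambda>(i, t). Poly_Mapping.lookup (fst x $ i) t) ps" for x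
  have ps: "distinct ps" "set ps = {0..<c} \<times> {-m..0}"
    by (simp_all add: ps_def distinct_product)
  have "set vs \<subseteq> carrier_vec c"
    by (auto simp: vs_def monomial_vec_def)
  then have comb: "(rlin_comb c (map fst es) cs, rlin_comb c (map snd es) cs)
      = (rlin_comb c vs cs, xpow m \<cdot>\<^sub>v rlin_comb c vs cs)" for cs
    by (simp add: es_def o_def rlin_comb_smult[symmetric])
  show ?thesis
  proof (rule fg_free_RI[where es = es and coeffs = coeffs])
    show "set es \<subseteq> sections_O c m"
      using ps(2)
      by (auto simp: es_def vs_def sections_O_def smult_monomial_vec Rx_eq_supported_in
          Rxinv_eq_supported_in intro!: monomial_vec_supported_in)
  next
    fix x :: "'a laurent vec \<times> 'a laurent vec"
    assume x: "x \<in> sections_O c m"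
    then obtain u where u: "x = (u, xpow m \<cdot>\<^sub>v u)" "u \<in> carrier_vec c"
      by (auto simp: sections_O_def vec_over_def)
    have "rlin_comb c vs (coeffs x) = u"
      unfolding vs_def coeffs_def u(1) fst_conv
      using ps u(2) sections_O_support[OF x[unfolded u(1)]]
      by (intro rlin_comb_monomial_vecs_coefficients) auto
    moreover have "length (coeffs x) = length es"
      by (simp add: coeffs_def es_def vs_def)
    ultimately show "length (coeffs x) = length es \<and>
        x = (rlin_comb c (map fst es) (coeffs x), rlin_comb c (map snd es) (coeffs x))"
      using u(1) by (simp add: comb)
  next
    fix cs :: "'a list" assume "length cs = length es"
    then show "coeffs (rlin_comb c (map fst es) cs, rlin_comb c (map snd es) cs) = cs"
      unfolding comb coeffs_def fst_conv vs_def
      using ps by (intro coefficients_rlin_comb_monomial_vecs) (auto simp: es_def vs_def)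
  qed (rule sections_O_closed)
qed

lemma laurent_split:
  fixes f :: "'a::ring_1 laurent"
  assumes "0 \<le> k"
  shows "\<exists>a\<in>Rxinv. \<exists>b\<in>Rx. - (xpow k * a) + xpow (- k) * b = f"
proof -
  define low where "low = Abs_poly_mapping (\<lambda>t. if t \<le> k then Poly_Mapping.lookup f t else 0)"
  have "finite {t. (if t \<le> k then Poly_Mapping.lookup f t else 0) \<noteq> 0}"
    by (rule finite_subset[of _ "Poly_Mapping.keys f"]) (auto simp: in_keys_iff)
  then have lookup_low: "Poly_Mapping.lookup low t = (if t \<le> k then Poly_Mapping.lookup f t else 0)" for t
    by (simp add: low_def)
  define a where "a = - (xpow (- k) * low)"
  define b where "b = xpow k * (f - low)"
  have "a \<in> Rxinv"
    by (simp add: Rxinv_eq_supported_in supported_in_iff a_def lookup_xpow_mult lookup_low)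
  moreover have "b \<in> Rx"
    using assms by (simp add: Rx_eq_supported_in supported_in_iff b_def lookup_xpow_mult lookup_minus lookup_low)
  moreover have "- (xpow k * a) + xpow (- k) * b = f"
    by (simp add: a_def b_def mult.assoc[symmetric] xpow_add)
  ultimately show ?thesis
    by blast
qed

lemma H1_vanishes_xpow_scalar:
  assumes "\<And>n. r n \<noteq> 0 \<Longrightarrow> 0 \<le> k n"
  shows "H1_vanishes r (\<lambda>n. xpow (k n) \<cdot>\<^sub>m 1\<^sub>m (r n)) r (\<lambda>n. xpow (- k n) \<cdot>\<^sub>m 1\<^sub>m (r n)) r"
  unfolding H1_vanishes_def
proof (intro allI ballI)
  fix n and v :: "'a laurent vec"
  assume v: "v \<in> carrier_vec (r n)"
  have "\<exists>ab. fst ab \<in> Rxinv \<and> snd ab \<in> Rx \<and>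
      - (xpow (k n) * fst ab) + xpow (- k n) * snd ab = v $ i" if "i < r n" for i
  proof -
    have "0 \<le> k n"
      using assms that by simp
    then show ?thesis
      using laurent_split[of "k n" "v $ i"] by auto
  qed
  then obtain g where g: "\<And>i. i < r n \<Longrightarrow> fst (g i) \<in> Rxinv \<and> snd (g i) \<in> Rx \<and>
      - (xpow (k n) * fst (g i)) + xpow (- k n) * snd (g i) = v $ i"
    by metis
  define u where "u = vec (r n) (\<lambda>i. fst (g i))"
  define w where "w = vec (r n) (\<lambda>i. snd (g i))"
  have "- ((xpow (k n) \<cdot>\<^sub>m 1\<^sub>m (r n)) *\<^sub>v u) + (xpow (- k n) \<cdot>\<^sub>m 1\<^sub>m (r n)) *\<^sub>v w = v"
    using v g by (intro eq_vecI) (auto simp: smult_mat_mult_vec u_def w_def)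
  moreover have "u \<in> vec_over Rxinv (r n)" "w \<in> vec_over Rx (r n)"
    using g by (auto simp: u_def w_def vec_over_def)
  ultimately show "\<exists>u\<in>vec_over Rxinv (r n). \<exists>w\<in>vec_over Rx (r n).
      - ((xpow (k n) \<cdot>\<^sub>m 1\<^sub>m (r n)) *\<^sub>v u) + (xpow (- k n) \<cdot>\<^sub>m 1\<^sub>m (r n)) *\<^sub>v w = v"
    by blast
qed

lemma sheaf_complex_free_xpow_twist:
  assumes "free_complex UNIV r d"
    and bound: "\<And>n i j. i < r (n - 1) \<Longrightarrow> j < r n \<Longrightarrow> Poly_Mapping.keys (d n $$ (i, j)) \<subseteq> {-B..B}"
    and k_step: "\<And>n. k (n - 1) = k n + B"
  shows "sheaf_complex_free
      r (\<lambda>n. xpow (- B) \<cdot>\<^sub>m d n) (\<lambda>n. xpow (k n) \<cdot>\<^sub>m 1\<^sub>m (r n))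
      r (\<lambda>n. xpow B \<cdot>\<^sub>m d n) (\<lambda>n. xpow (- k n) \<cdot>\<^sub>m 1\<^sub>m (r n)) r d"
proof -
  have "chain_map UNIV r (\<lambda>n. xpow (- B) \<cdot>\<^sub>m d n) r d (\<lambda>n. xpow (k n) \<cdot>\<^sub>m 1\<^sub>m (r n))"
    by (rule chain_map_xpow_scalar[OF assms(1)]) (simp add: k_step)
  moreover have "chain_map UNIV r (\<lambda>n. xpow B \<cdot>\<^sub>m d n) r d (\<lambda>n. xpow (- k n) \<cdot>\<^sub>m 1\<^sub>m (r n))"
    by (rule chain_map_xpow_scalar[OF assms(1), where k = "\<lambda>n. - k n"]) (simp add: k_step)
  ultimately show ?thesis
    unfolding sheaf_complex_free_def
    using assms(1) free_complex_twist_Rxinv[OF assms(1) bound] free_complex_twist_Rx[OF assms(1) bound]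
    by (simp add: iso_mat_over_xpow_scalar)
qed

lemma H0_bounded_fg_free_complex_xpow_scalar:
  assumes sheaf: "sheaf_complex_free
      r dm (\<lambda>n. xpow (k n) \<cdot>\<^sub>m 1\<^sub>m (r n)) r dp (\<lambda>n. xpow (- k n) \<cdot>\<^sub>m 1\<^sub>m (r n)) r d"
  shows "H0_bounded_fg_free_complex
      r dm (\<lambda>n. xpow (k n) \<cdot>\<^sub>m 1\<^sub>m (r n)) r dp (\<lambda>n. xpow (- k n) \<cdot>\<^sub>m 1\<^sub>m (r n)) r"
proof (rule H0_bounded_fg_free_complexI[OF sheaf])
  show "bounded_ranks r" "bounded_ranks r"
    using sheaf by (simp_all add: sheaf_complex_free_def free_complex_def)
  show "fg_free_R (r n) (r n)
      (H0 r (\<lambda>n. xpow (k n) \<cdot>\<^sub>m 1\<^sub>m (r n)) r (\<lambda>n. xpow (- k n) \<cdot>\<^sub>m 1\<^sub>m (r n)) r n)" for n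
    unfolding H0_xpow_scalar by (rule sections_O_fg_free)
qed

theorem mainTheorem4:
  fixes rC :: "int \<Rightarrow> nat" and dC :: "int \<Rightarrow> 'a::ring_1 laurent mat"
  assumes "free_complex UNIV rC dC"
  shows "\<exists>a dm mum b dp mup c d.
           sheaf_complex_free a dm mum b dp mup c d \<and>
           complex_iso UNIV c d rC dC \<and>
           H0_bounded_fg_free_complex a dm mum b dp mup c \<and>
           H1_vanishes a mum b mup c"
proof -
  obtain B where "0 \<le> B"
    and bound: "\<And>n i j. i < rC (n - 1) \<Longrightarrow> j < rC n \<Longrightarrow> Poly_Mapping.keys (dC n $$ (i, j)) \<subseteq> {-B..B}"
    using free_complex_exponent_bound[OF assms] by blast
  obtain hi where hi: "\<And>n. hi < n \<Longrightarrow> rC n = 0"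
    using assms unfolding free_complex_def bounded_ranks_def by blast
  define k where "k n = B * (hi - n)" for n
  have "k (n - 1) = k n + B" for n
    by (simp add: k_def algebra_simps)
  then have sheaf: "sheaf_complex_free
      rC (\<lambda>n. xpow (- B) \<cdot>\<^sub>m dC n) (\<lambda>n. xpow (k n) \<cdot>\<^sub>m 1\<^sub>m (rC n))
      rC (\<lambda>n. xpow B \<cdot>\<^sub>m dC n) (\<lambda>n. xpow (- k n) \<cdot>\<^sub>m 1\<^sub>m (rC n)) rC dC"
    using sheaf_complex_free_xpow_twist[OF assms bound] by blast
  have "0 \<le> k n" if "rC n \<noteq> 0" for n
    using hi[of n] that \<open>0 \<le> B\<close> by (fastforce simp: k_def)
  then show ?thesis
    using sheaf complex_iso_refl[OF assms] H0_bounded_fg_free_complex_xpow_scalar[OF sheaf]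
      H1_vanishes_xpow_scalar by blast
qed

end
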